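(* Let $K$ be $(\kappa,\gamma)$-strongly stable. Let $\{M_t\}_{t=-H-1}^0$ be arbitrary with $M_t\in\mathcal M$, and let $\{M_t\}_{t=1}^{T-1}$ be generated by projected online gradient descent with constant learning rate $\eta>0$: $M_{t+1}=\Pi_{\mathcal M}(M_t-\eta\nabla_Mf_t(M_t))$, where $\Pi_{\mathcal M}(X)=\arg\min_{M'\in\mathcal M}\|X-M'\|_F$. Assume there is $L_c>0$ such that for every $k\in[0,H+1]$, $t\in[0,T-1]$ and $M_{t-1-H},\dots,M_t,\check M_{t-k}\in\mathcal M$, $$|F_t(M_{t-1-H:t})-F_t(M_{t-1-H:t-k-1},\check M_{t-k},M_{t-k+1:t})|\le L_c\|M_{t-k}-\check M_{t-k}\|_F.$$ Then, with $D:=\frac{4\kappa_B\kappa^3\sqrt n}{\gamma}$, for every $M\in\mathcal M$, $$\sum_{t=0}^{T-1}F_t(M_{t-1-H:t})-\sum_{t=0}^{T-1}f_t(M)\le L_c\eta\sum_{t=0}^{T-1}\sum_{i=1}^{\min\{H+1,t\}}\sum_{k=1}^i\|\nabla_Mf_{t-k}(M_{t-k})\|_F+\frac{D^2}{2\eta}+\frac\eta2\sum_{t=0}^{T-1}\|\nabla_Mf_t(M_t)\|_F^2.$$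
   Context: Linear system $x_{t+1}=Ax_t+Bu_t+w_t$; $n:=\max\{n_x,n_u\}$, $\kappa_B:=\max\{\|B\|,1\}$; $w_s:=0$ for $s<0$; $H$ a positive integer. $(\kappa,\gamma)$-strong stability: complex $P,Q$ with $A-BK=QPQ^{-1}$, $\|P\|\le1-\gamma$, $\|K\|,\|Q\|,\|Q^{-1}\|\le\kappa$. $A_K:=A-BK$. For $M=\{M^{[0]},\dots,M^{[H-1]}\}$, $\|M\|_F:=\|[M^{[0]},\dots,M^{[H-1]}]\|_F$. $\mathcal M:=\{M:\|M^{[i]}\|\le2\kappa_B\kappa^3(1-\gamma)^i\}$. Surrogate: $\Psi^{K,h}_{t,i}(M_{t-h:t}):=A_K^i\mathbf 1_{i\le h}+\sum_{j=0}^hA_K^jBM_{t-j}^{[i-j-1]}\mathbf 1_{i-j\in[1,H]}$; $y_t:=\sum_{i=0}^{2H}\Psi^{K,H}_{t-1,i}(M_{t-1-H:t-1})w_{t-1-i}$; $v_t:=-Ky_t+\sum_{i=1}^HM_t^{[i-1]}w_{t-i}$; $F_t(M_{t-1-H:t}):=c_t(y_t,v_t)$ for differentiable convex $c_t$; $f_t(M):=F_t(M,\dots,M)$. The statement holds for any fixed realization of the noise. *)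

theory Defs
  imports "HOL-Analysis.Analysis"
begin

(* Matrices: an m x n matrix with entries in 'a is 'a^'n^'m (rows indexed by 'm).
   State dimension n_x = CARD('x), input dimension n_u = CARD('u). *)

text \<open>Matrix power w.r.t. matrix multiplication (note: ^ on vec is entrywise).\<close>
fun mpow :: "'a::semiring_1^'n^'n \<Rightarrow> nat \<Rightarrow> 'a^'n^'n" where
  "mpow A 0 = mat 1"
| "mpow A (Suc k) = A ** mpow A k"

definition opnorm :: "'a::real_normed_field^'n^'m \<Rightarrow> real" where
  "opnorm X = onorm (\<lambda>v. X *v v)"

definition strongly_stable ::
  "real \<Rightarrow> real \<Rightarrow> real^'x^'x \<Rightarrow> real^'u^'x \<Rightarrow> real^'x^'u \<Rightarrow> bool" where
  "strongly_stable \<kappa> \<gamma> A B K \<longleftrightarrow> 0 < \<gamma> \<and>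
     (\<exists>P Q Qi :: complex^'x^'x.
        Q ** Qi = mat 1 \<and> Qi ** Q = mat 1 \<and>
        (\<chi> i j. complex_of_real ((A - B ** K) $ i $ j)) = Q ** P ** Qi \<and>
        opnorm P \<le> 1 - \<gamma> \<and> opnorm K \<le> \<kappa> \<and> opnorm Q \<le> \<kappa> \<and> opnorm Qi \<le> \<kappa>)"

text \<open>A policy M = {M^[0],...,M^[H-1]} is a function nat => matrix, zero at indices >= H.\<close>
definition frob_inner :: "nat \<Rightarrow> (nat \<Rightarrow> real^'x^'u) \<Rightarrow> (nat \<Rightarrow> real^'x^'u) \<Rightarrow> real" where
  "frob_inner H M N = (\<Sum>i<H. inner (M i) (N i))"

definition frob :: "nat \<Rightarrow> (nat \<Rightarrow> real^'x^'u) \<Rightarrow> real" where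
  "frob H M = sqrt (\<Sum>i<H. (norm (M i))\<^sup>2)"

definition policy_space :: "nat \<Rightarrow> (nat \<Rightarrow> real^'x^'u) set" where
  "policy_space H = {M. \<forall>i\<ge>H. M i = 0}"

definition Mset :: "nat \<Rightarrow> real \<Rightarrow> real \<Rightarrow> real \<Rightarrow> (nat \<Rightarrow> real^'x^'u) set" where
  "Mset H \<kappa>B \<kappa> \<gamma> = {M. M \<in> policy_space H \<and>
      (\<forall>i<H. opnorm (M i) \<le> 2 * \<kappa>B * \<kappa>^3 * (1 - \<gamma>)^i)}"

definition is_grad :: "nat \<Rightarrow> ((nat \<Rightarrow> real^'x^'u) \<Rightarrow> real) \<Rightarrow> (nat \<Rightarrow> real^'x^'u)
     \<Rightarrow> (nat \<Rightarrow> real^'x^'u) \<Rightarrow> bool" where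
  "is_grad H f M G \<longleftrightarrow> G \<in> policy_space H \<and>
     (\<forall>\<epsilon>>0. \<exists>\<delta>>0. \<forall>D \<in> policy_space H. frob H D < \<delta> \<longrightarrow>
        \<bar>f (\<lambda>i. M i + D i) - f M - frob_inner H G D\<bar> \<le> \<epsilon> * frob H D)"

definition grad :: "nat \<Rightarrow> ((nat \<Rightarrow> real^'x^'u) \<Rightarrow> real) \<Rightarrow> (nat \<Rightarrow> real^'x^'u)
     \<Rightarrow> (nat \<Rightarrow> real^'x^'u)" where
  "grad H f M = (THE G. is_grad H f M G)"

definition proj :: "nat \<Rightarrow> (nat \<Rightarrow> real^'x^'u) set \<Rightarrow> (nat \<Rightarrow> real^'x^'u) \<Rightarrow> (nat \<Rightarrow> real^'x^'u)" where
  "proj H S X = (THE Y. Y \<in> S \<and> (\<forall>Z\<in>S. frob H (\<lambda>i. X i - Y i) \<le> frob H (\<lambda>i. X i - Z i)))"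

text \<open>Surrogate transfer matrix Psi^{K,h}_{t,i}(M_{t-h:t}); Ms is the policy sequence indexed by time.\<close>
definition Psi :: "nat \<Rightarrow> real^'x^'x \<Rightarrow> real^'u^'x \<Rightarrow> real^'x^'u \<Rightarrow> (int \<Rightarrow> nat \<Rightarrow> real^'x^'u)
     \<Rightarrow> int \<Rightarrow> nat \<Rightarrow> nat \<Rightarrow> real^'x^'x" where
  "Psi H A B K Ms t h i =
     (if i \<le> h then mpow (A - B ** K) i else 0) +
     (\<Sum>j\<in>{0..h}. if j < i \<and> i - j \<le> H
        then mpow (A - B ** K) j ** B ** Ms (t - int j) (i - j - 1) else 0)"

definition ysurr :: "nat \<Rightarrow> real^'x^'x \<Rightarrow> real^'u^'x \<Rightarrow> real^'x^'u \<Rightarrow> (int \<Rightarrow> real^'x)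
     \<Rightarrow> (int \<Rightarrow> nat \<Rightarrow> real^'x^'u) \<Rightarrow> int \<Rightarrow> real^'x" where
  "ysurr H A B K w Ms t = (\<Sum>i\<in>{0..2*H}. Psi H A B K Ms (t - 1) H i *v w (t - 1 - int i))"

definition vsurr :: "nat \<Rightarrow> real^'x^'x \<Rightarrow> real^'u^'x \<Rightarrow> real^'x^'u \<Rightarrow> (int \<Rightarrow> real^'x)
     \<Rightarrow> (int \<Rightarrow> nat \<Rightarrow> real^'x^'u) \<Rightarrow> int \<Rightarrow> real^'u" where
  "vsurr H A B K w Ms t = - (K *v ysurr H A B K w Ms t) + (\<Sum>i\<in>{1..H}. Ms t (i - 1) *v w (t - int i))"

text \<open>F_t(M_{t-1-H:t}) (depends only on Ms on the window [t-1-H, t]).\<close>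
definition Fsurr :: "nat \<Rightarrow> real^'x^'x \<Rightarrow> real^'u^'x \<Rightarrow> real^'x^'u \<Rightarrow> (int \<Rightarrow> real^'x)
     \<Rightarrow> (nat \<Rightarrow> real^'x \<Rightarrow> real^'u \<Rightarrow> real) \<Rightarrow> nat \<Rightarrow> (int \<Rightarrow> nat \<Rightarrow> real^'x^'u) \<Rightarrow> real" where
  "Fsurr H A B K w c t Ms = c t (ysurr H A B K w Ms (int t)) (vsurr H A B K w Ms (int t))"

definition fsurr :: "nat \<Rightarrow> real^'x^'x \<Rightarrow> real^'u^'x \<Rightarrow> real^'x^'u \<Rightarrow> (int \<Rightarrow> real^'x)
     \<Rightarrow> (nat \<Rightarrow> real^'x \<Rightarrow> real^'u \<Rightarrow> real) \<Rightarrow> nat \<Rightarrow> (nat \<Rightarrow> real^'x^'u) \<Rightarrow> real" where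
  "fsurr H A B K w c t M = Fsurr H A B K w c t (\<lambda>_. M)"

end

theory Submission
  imports Defs
begin

(* The regret splits into two parts. First, y_t and v_t depend affinely on a stationary
   policy M, so each f_t is convex and differentiable, and projected online gradient descent
   on f_t has the classical regret bound D^2/(2 eta) + eta/2 sum_t |grad f_t(M_t)|_F^2, where D
   bounds the Frobenius diameter of the set of policies (a geometric series over the blocks
   M^[i]). Second, F_t(M_{t-1-H:t}) differs from f_t(M_t) by replacing the past policies
   M_{t-k} with M_t one at a time; each replacement costs at most L_c |M_{t-k} - M_t|_F, and
   since the projection is nonexpansive, |M_{t-k} - M_t|_F <= eta sum_{j<=k} |grad f_{t-j}(M_{t-j})|_F.
   Policies before time 1 only multiply vanishing noise, so min(H+1, t) replacements suffice. *)

section \<open>Frobenius geometry of policies\<close>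

lemma frob_L2: "frob H X = L2_set (\<lambda>i. norm (X i)) {..<H}"
  by (simp add: frob_def L2_set_def)

lemma frob_nonneg [simp]: "0 \<le> frob H X"
  by (simp add: frob_def sum_nonneg)

lemma frob_sq: "(frob H X)\<^sup>2 = (\<Sum>i<H. (norm (X i))\<^sup>2)"
  by (simp add: frob_def sum_nonneg)

lemma norm_le_frob: "i < H \<Longrightarrow> norm (X i) \<le> frob H X"
  unfolding frob_L2 by (rule member_le_L2_set) auto

lemma frob_triangle: "frob H (\<lambda>i. a i + b i) \<le> frob H a + frob H b"
proof -
  have "frob H (\<lambda>i. a i + b i) \<le> L2_set (\<lambda>i. norm (a i) + norm (b i)) {..<H}"
    unfolding frob_L2 by (rule L2_set_mono) (auto intro: norm_triangle_ineq)
  also have "\<dots> \<le> frob H a + frob H b"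
    unfolding frob_L2 by (rule L2_set_triangle_ineq)
  finally show ?thesis .
qed

lemma frob_scaleR: "frob H (\<lambda>i. s *\<^sub>R X i) = \<bar>s\<bar> * frob H X"
proof -
  have "(\<Sum>i<H. (norm (s *\<^sub>R X i))\<^sup>2) = s\<^sup>2 * (\<Sum>i<H. (norm (X i))\<^sup>2)"
    by (simp add: sum_distrib_left power_mult_distrib)
  then show ?thesis by (simp add: frob_def real_sqrt_mult)
qed

lemma frob_minus_commute: "frob H (\<lambda>i. a i - b i) = frob H (\<lambda>i. b i - a i)"
  by (simp add: frob_def norm_minus_commute)

lemma frob_inner_self: "frob_inner H X X = (frob H X)\<^sup>2"
  by (simp add: frob_inner_def frob_sq power2_norm_eq_inner)

lemma frob_inner_scaleR_right: "frob_inner H G (\<lambda>i. s *\<^sub>R X i) = s * frob_inner H G X"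
  by (simp add: frob_inner_def sum_distrib_left)

lemma frob_inner_minus_commute:
  "frob_inner H G (\<lambda>i. a i - b i) = - frob_inner H G (\<lambda>i. b i - a i)"
  by (simp add: frob_inner_def inner_diff_right sum_subtractf)

lemma frob_diff_scaleR_sq:
  "(frob H (\<lambda>i. x i - e *\<^sub>R g i))\<^sup>2
     = (frob H x)\<^sup>2 - 2 * e * frob_inner H g x + e\<^sup>2 * (frob H g)\<^sup>2"
proof -
  have "(norm (x i - e *\<^sub>R g i))\<^sup>2
      = (norm (x i))\<^sup>2 - 2 * e * inner (g i) (x i) + e\<^sup>2 * (norm (g i))\<^sup>2" for i
    unfolding power2_norm_eq_inner
    by (simp add: inner_diff_left inner_diff_right inner_commute power2_eq_square algebra_simps)
  then show ?thesis
    by (simp add: frob_sq frob_inner_def sum.distrib sum_subtractf sum_distrib_left)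
qed

lemma policy_space_diff:
  "a \<in> policy_space H \<Longrightarrow> b \<in> policy_space H \<Longrightarrow> (\<lambda>i. a i - b i) \<in> policy_space H"
  by (simp add: policy_space_def)

lemma policy_space_scaleR: "a \<in> policy_space H \<Longrightarrow> (\<lambda>i. s *\<^sub>R a i) \<in> policy_space H"
  by (simp add: policy_space_def)

lemma policy_space_eqI:
  assumes "a \<in> policy_space H" "b \<in> policy_space H" "\<And>i. i < H \<Longrightarrow> a i = b i"
  shows "a = b"
proof
  show "a i = b i" for i
    using assms by (cases "i < H") (auto simp: policy_space_def)
qed

section \<open>Gradients on the policy space\<close>

text \<open>Function spaces carry no vector space instance in the library, so linearity on policies
  is stated pointwise.\<close>

definition policy_linear :: "((nat \<Rightarrow> 'a::real_vector) \<Rightarrow> 'b::real_vector) \<Rightarrow> bool" where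
  "policy_linear h \<longleftrightarrow>
    (\<forall>a b. h (\<lambda>i. a i + b i) = h a + h b) \<and> (\<forall>r a. h (\<lambda>i. r *\<^sub>R a i) = r *\<^sub>R h a)"

lemma policy_linear_component:
  fixes h :: "(nat \<Rightarrow> 'a::real_vector) \<Rightarrow> 'b::real_vector"
  assumes "policy_linear h"
  shows "linear (\<lambda>X. h (\<lambda>i. if i = k then X else 0))"
proof (rule linearI)
  fix X Y :: 'a
  have "(\<lambda>i. if i = k then X + Y else 0) = (\<lambda>i. (if i = k then X else 0) + (if i = k then Y else 0))"
    by (simp add: fun_eq_iff)
  then show "h (\<lambda>i. if i = k then X + Y else 0) = h (\<lambda>i. if i = k then X else 0) + h (\<lambda>i. if i = k then Y else 0)"
    using assms by (simp add: policy_linear_def)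
next
  fix r and X :: 'a
  have "(\<lambda>i. if i = k then r *\<^sub>R X else 0) = (\<lambda>i. r *\<^sub>R (if i = k then X else 0))"
    by (simp add: fun_eq_iff)
  then show "h (\<lambda>i. if i = k then r *\<^sub>R X else 0) = r *\<^sub>R h (\<lambda>i. if i = k then X else 0)"
    using assms by (simp add: policy_linear_def)
qed

lemma policy_linear_zero:
  assumes "policy_linear h"
  shows "h (\<lambda>i. 0) = 0"
proof -
  have "\<forall>r a. h (\<lambda>i. r *\<^sub>R a i) = r *\<^sub>R h a"
    using assms by (simp add: policy_linear_def)
  from this[rule_format, of 0 "\<lambda>i. 0"] show ?thesis
    by simp
qed

lemma policy_linear_decomp:
  assumes h: "policy_linear h" and D: "D \<in> policy_space H"
  shows "h D = (\<Sum>k<H. h (\<lambda>i. if i = k then D k else 0))"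
proof -
  have h_sum: "h (\<lambda>i. \<Sum>k\<in>S. F k i) = (\<Sum>k\<in>S. h (F k))" if "finite S" for S and F :: "nat \<Rightarrow> nat \<Rightarrow> _"
    using that
  proof (induction S rule: finite_induct)
    case empty
    then show ?case using policy_linear_zero[OF h] by simp
  next
    case (insert x S)
    then show ?case using h by (simp add: policy_linear_def)
  qed
  have "D = (\<lambda>i. \<Sum>k<H. (\<lambda>i. if i = k then D k else 0) i)"
  proof
    show "D i = (\<Sum>k<H. (\<lambda>i. if i = k then D k else 0) i)" for i
      using D by (cases "i < H") (auto simp: policy_space_def)
  qed
  then have "h D = h (\<lambda>i. \<Sum>k<H. (\<lambda>i. if i = k then D k else 0) i)"
    by simp
  also have "\<dots> = (\<Sum>k<H. h (\<lambda>i. if i = k then D k else 0))"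
    by (rule h_sum) simp
  finally show ?thesis .
qed

lemma policy_linear_bound:
  fixes h :: "(nat \<Rightarrow> real^'x^'u) \<Rightarrow> 'v::euclidean_space"
  assumes h: "policy_linear h"
  shows "\<exists>C>0. \<forall>D\<in>policy_space H. norm (h D) \<le> C * frob H D"
proof -
  have "\<exists>C>0. \<forall>X. norm (h (\<lambda>i. if i = k then X else 0)) \<le> norm X * C" for k
    using policy_linear_component[OF h] linear_conv_bounded_linear bounded_linear.pos_bounded
    by blast
  then obtain C where C: "\<And>k. C k > 0" "\<And>k X. norm (h (\<lambda>i. if i = k then X else 0)) \<le> norm X * C k"
    by metis
  have "norm (h D) \<le> (1 + (\<Sum>k<H. C k)) * frob H D" if D: "D \<in> policy_space H" for D
  proof -
    have "norm (h D) \<le> (\<Sum>k<H. norm (h (\<lambda>i. if i = k then D k else 0)))"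
      unfolding policy_linear_decomp[OF h D] by (rule norm_sum)
    also have "\<dots> \<le> (\<Sum>k<H. frob H D * C k)"
    proof (rule sum_mono)
      fix k assume "k \<in> {..<H}"
      then have "norm (D k) * C k \<le> frob H D * C k"
        using C(1)[of k] by (simp add: norm_le_frob mult_right_mono)
      then show "norm (h (\<lambda>i. if i = k then D k else 0)) \<le> frob H D * C k"
        using C(2)[of k "D k"] by linarith
    qed
    also have "\<dots> = frob H D * (\<Sum>k<H. C k)"
      by (simp add: sum_distrib_left)
    also have "\<dots> \<le> (1 + (\<Sum>k<H. C k)) * frob H D"
      by (simp add: algebra_simps)
    finally show ?thesis .
  qed
  moreover have "0 < 1 + (\<Sum>k<H. C k)"
    using C(1) by (simp add: add_pos_nonneg sum_nonneg less_imp_le)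
  ultimately show ?thesis by blast
qed

lemma policy_linear_riesz:
  fixes l :: "(nat \<Rightarrow> real^'x^'u) \<Rightarrow> real"
  assumes l: "policy_linear l"
  shows "\<exists>G\<in>policy_space H. \<forall>D\<in>policy_space H. l D = frob_inner H G D"
proof -
  define G where "G k = (if k < H then adjoint (\<lambda>X. l (\<lambda>i. if i = k then X else 0)) 1 else 0)" for k
  have G: "l (\<lambda>i. if i = k then X else 0) = inner (G k) X" if "k < H" for k X
    using adjoint_works[OF policy_linear_component[OF l, where k=k], of X 1] that
    by (simp add: G_def inner_commute)
  have "G \<in> policy_space H"
    by (simp add: G_def policy_space_def)
  moreover have "l D = frob_inner H G D" if "D \<in> policy_space H" for D
    using policy_linear_decomp[OF l that] G by (simp add: frob_inner_def)
  ultimately show ?thesis by blast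
qed

lemma is_grad_unique:
  assumes G1: "is_grad H g M G1" and G2: "is_grad H g M G2"
  shows "G1 = G2"
proof (rule ccontr)
  assume "G1 \<noteq> G2"
  define E where "E = (\<lambda>i. G1 i - G2 i)"
  have PG: "G1 \<in> policy_space H" "G2 \<in> policy_space H"
    using G1 G2 by (auto simp: is_grad_def)
  then have PE: "E \<in> policy_space H"
    unfolding E_def by (rule policy_space_diff)
  have "frob H E \<noteq> 0"
  proof
    assume "frob H E = 0"
    then have "G1 i = G2 i" if "i < H" for i
      using norm_le_frob[OF that, of E] by (simp add: E_def)
    then show False
      using policy_space_eqI[OF PG] \<open>G1 \<noteq> G2\<close> by blast
  qed
  then have fE: "frob H E > 0"
    using frob_nonneg[of H E] by linarith
  define \<epsilon> where "\<epsilon> = frob H E / 4"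
  have "\<epsilon> > 0"
    using fE by (simp add: \<epsilon>_def)
  obtain d1 where d1: "d1 > 0" "\<forall>D\<in>policy_space H. frob H D < d1 \<longrightarrow>
        \<bar>g (\<lambda>i. M i + D i) - g M - frob_inner H G1 D\<bar> \<le> \<epsilon> * frob H D"
    using G1 \<open>\<epsilon> > 0\<close> unfolding is_grad_def by blast
  obtain d2 where d2: "d2 > 0" "\<forall>D\<in>policy_space H. frob H D < d2 \<longrightarrow>
        \<bar>g (\<lambda>i. M i + D i) - g M - frob_inner H G2 D\<bar> \<le> \<epsilon> * frob H D"
    using G2 \<open>\<epsilon> > 0\<close> unfolding is_grad_def by blast
  define s where "s = min d1 d2 / (2 * frob H E)"
  have s: "s > 0" "s * frob H E < d1" "s * frob H E < d2"
    using d1 d2 fE by (auto simp: s_def)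
  define D where "D = (\<lambda>i. s *\<^sub>R E i)"
  have fD: "frob H D = s * frob H E"
    using s by (simp add: D_def frob_scaleR)
  have PD: "D \<in> policy_space H"
    unfolding D_def by (rule policy_space_scaleR[OF PE])
  have approx: "\<bar>g (\<lambda>i. M i + D i) - g M - frob_inner H G1 D\<bar> \<le> \<epsilon> * frob H D"
    "\<bar>g (\<lambda>i. M i + D i) - g M - frob_inner H G2 D\<bar> \<le> \<epsilon> * frob H D"
    using d1(2) d2(2) PD s(2,3)[folded fD] by blast+
  have "s * (frob H E)\<^sup>2 = frob_inner H G1 D - frob_inner H G2 D"
    by (simp add: D_def E_def frob_inner_scaleR_right frob_inner_self[symmetric]
        frob_inner_def inner_diff_left sum_subtractf right_diff_distrib)
  also have "\<dots> \<le> 2 * \<epsilon> * frob H D"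
    using approx unfolding abs_le_iff by linarith
  also have "\<dots> = s * (frob H E)\<^sup>2 / 2"
    by (simp add: fD \<epsilon>_def power2_eq_square)
  finally have "s * (frob H E)\<^sup>2 \<le> s * (frob H E)\<^sup>2 / 2" .
  moreover have "0 < s * (frob H E)\<^sup>2"
    using s fE by simp
  ultimately show False
    by linarith
qed

lemma grad_eqI: "is_grad H g M G \<Longrightarrow> grad H g M = G"
  unfolding grad_def by (rule the_equality) (auto intro: is_grad_unique)

lemma is_grad_affine_comp:
  fixes h :: "(nat \<Rightarrow> real^'x^'u) \<Rightarrow> 'v::euclidean_space"
  assumes h: "policy_linear h"
    and g: "\<And>D. g (\<lambda>i. M i + D i) = \<phi> (p + h D)"
    and \<phi>: "\<phi> differentiable (at p)"
  shows "is_grad H g M (grad H g M)"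
proof -
  obtain L where L: "(\<phi> has_derivative L) (at p)"
    using \<phi> unfolding differentiable_def by blast
  then have "linear L"
    using has_derivative_linear by blast
  then have "policy_linear (\<lambda>D. L (h D))"
    using h by (simp add: policy_linear_def linear_add linear_scale)
  then obtain G where G: "G \<in> policy_space H" "\<And>D. D \<in> policy_space H \<Longrightarrow> L (h D) = frob_inner H G D"
    using policy_linear_riesz by blast
  obtain C where C: "C > 0" "\<And>D. D \<in> policy_space H \<Longrightarrow> norm (h D) \<le> C * frob H D"
    using policy_linear_bound[OF h] by blast
  have gM: "g M = \<phi> p"
    using g[of "\<lambda>i. 0"] policy_linear_zero[OF h] by simp
  have "is_grad H g M G"
    unfolding is_grad_def
  proof (intro conjI G allI impI)
    fix \<epsilon> :: real assume "\<epsilon> > 0"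
    then obtain d where d: "d > 0"
      "\<And>y. norm (y - p) < d \<Longrightarrow> norm (\<phi> y - \<phi> p - L (y - p)) \<le> \<epsilon> / C * norm (y - p)"
      using L C(1) unfolding has_derivative_at_alt by (meson divide_pos_pos)
    show "\<exists>\<delta>>0. \<forall>D\<in>policy_space H. frob H D < \<delta> \<longrightarrow>
        \<bar>g (\<lambda>i. M i + D i) - g M - frob_inner H G D\<bar> \<le> \<epsilon> * frob H D"
    proof (intro exI[of _ "d / C"] conjI ballI impI)
      fix D :: "nat \<Rightarrow> real^'x^'u"
      assume D: "D \<in> policy_space H" "frob H D < d / C"
      have "C * frob H D < d"
        using D(2) C(1) by (simp add: pos_less_divide_eq mult.commute)
      then have hD: "norm (h D) < d"
        using C(2)[OF D(1)] by linarith
      have "\<bar>g (\<lambda>i. M i + D i) - g M - frob_inner H G D\<bar> = norm (\<phi> (p + h D) - \<phi> p - L (h D))"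
        using g[of D] gM G(2)[OF D(1)] by simp
      also have "\<dots> \<le> \<epsilon> / C * norm (h D)"
        using d(2)[of "p + h D"] hD by simp
      also have "\<dots> \<le> \<epsilon> / C * (C * frob H D)"
        by (rule mult_left_mono[OF C(2)[OF D(1)]]) (use \<open>\<epsilon> > 0\<close> C(1) in simp)
      finally show "\<bar>g (\<lambda>i. M i + D i) - g M - frob_inner H G D\<bar> \<le> \<epsilon> * frob H D"
        using C(1) by simp
    qed (use d C in simp)
  qed
  then show ?thesis
    using grad_eqI by metis
qed

lemma is_grad_convex_ineq:
  assumes G: "is_grad H g M G" and PM: "M \<in> policy_space H" and PM': "M' \<in> policy_space H"
    and convex: "\<And>s. 0 < s \<Longrightarrow> s \<le> 1 \<Longrightarrow>
      g (\<lambda>i. M i + s *\<^sub>R (M' i - M i)) \<le> (1 - s) * g M + s * g M'"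
  shows "g M + frob_inner H G (\<lambda>i. M' i - M i) \<le> g M'"
proof -
  define D where "D = (\<lambda>i. M' i - M i)"
  have PD: "D \<in> policy_space H"
    unfolding D_def using PM' PM by (rule policy_space_diff)
  have fD1: "0 < frob H D + 1"
    using frob_nonneg[of H D] by linarith
  have approx: "frob_inner H G D \<le> g M' - g M + \<epsilon> * frob H D" if "\<epsilon> > 0" for \<epsilon>
  proof -
    obtain d where d: "d > 0" "\<forall>D\<in>policy_space H. frob H D < d \<longrightarrow>
        \<bar>g (\<lambda>i. M i + D i) - g M - frob_inner H G D\<bar> \<le> \<epsilon> * frob H D"
      using G \<open>\<epsilon> > 0\<close> unfolding is_grad_def by blast
    define s where "s = min 1 (d / (frob H D + 1))"
    have s: "0 < s" "s \<le> 1"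
      using d fD1 by (auto simp: s_def)
    have "s * frob H D \<le> d / (frob H D + 1) * frob H D"
      by (rule mult_right_mono) (auto simp: s_def)
    also have "\<dots> < d"
      using d(1) fD1 by (simp add: field_simps)
    finally have "frob H (\<lambda>i. s *\<^sub>R D i) < d"
      using s by (simp add: frob_scaleR)
    then have "\<bar>g (\<lambda>i. M i + s *\<^sub>R D i) - g M - frob_inner H G (\<lambda>i. s *\<^sub>R D i)\<bar>
        \<le> \<epsilon> * frob H (\<lambda>i. s *\<^sub>R D i)"
      using d(2) policy_space_scaleR[OF PD, of s] by blast
    then have "s * frob_inner H G D - \<epsilon> * (s * frob H D) \<le> g (\<lambda>i. M i + s *\<^sub>R D i) - g M"
      using s by (simp add: frob_scaleR frob_inner_scaleR_right abs_le_iff)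
    also have "\<dots> \<le> s * (g M' - g M)"
      using convex[OF s] by (simp add: D_def algebra_simps)
    finally have "s * (frob_inner H G D - \<epsilon> * frob H D) \<le> s * (g M' - g M)"
      by (simp add: algebra_simps)
    then show ?thesis
      using s by simp
  qed
  have "frob_inner H G D \<le> g M' - g M"
  proof (rule field_le_epsilon)
    fix e :: real assume "0 < e"
    then have "frob_inner H G D \<le> g M' - g M + e / (frob H D + 1) * frob H D"
      using fD1 by (intro approx) simp
    also have "\<dots> \<le> g M' - g M + e"
      using \<open>0 < e\<close> fD1 by (simp add: field_simps)
    finally show "frob_inner H G D \<le> g M' - g M + e" .
  qed
  then show ?thesis
    by (simp add: D_def)
qed

section \<open>Convexity of the stationary surrogate loss\<close>

definition Psi_lin :: "nat \<Rightarrow> real^'x^'x \<Rightarrow> real^'u^'x \<Rightarrow> real^'x^'u \<Rightarrow> (nat \<Rightarrow> real^'x^'u)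
    \<Rightarrow> nat \<Rightarrow> real^'x^'x" where
  "Psi_lin H A B K M i = (\<Sum>j\<in>{0..H}. if j < i \<and> i - j \<le> H
      then mpow (A - B ** K) j ** B ** M (i - j - 1) else 0)"

definition ysurr_lin :: "nat \<Rightarrow> real^'x^'x \<Rightarrow> real^'u^'x \<Rightarrow> real^'x^'u \<Rightarrow> (int \<Rightarrow> real^'x)
    \<Rightarrow> int \<Rightarrow> (nat \<Rightarrow> real^'x^'u) \<Rightarrow> real^'x" where
  "ysurr_lin H A B K w t M = (\<Sum>i\<in>{0..2*H}. Psi_lin H A B K M i *v w (t - 1 - int i))"

definition vsurr_lin :: "nat \<Rightarrow> real^'x^'x \<Rightarrow> real^'u^'x \<Rightarrow> real^'x^'u \<Rightarrow> (int \<Rightarrow> real^'x)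
    \<Rightarrow> int \<Rightarrow> (nat \<Rightarrow> real^'x^'u) \<Rightarrow> real^'u" where
  "vsurr_lin H A B K w t M = - (K *v ysurr_lin H A B K w t M) + (\<Sum>i\<in>{1..H}. M (i - 1) *v w (t - int i))"

lemma Psi_const:
  "Psi H A B K (\<lambda>_. M) s H i = (if i \<le> H then mpow (A - B ** K) i else 0) + Psi_lin H A B K M i"
  by (simp add: Psi_def Psi_lin_def)

lemma Psi_lin_add: "Psi_lin H A B K (\<lambda>k. a k + b k) i = Psi_lin H A B K a i + Psi_lin H A B K b i"
  unfolding Psi_lin_def sum.distrib[symmetric] by (rule sum.cong) (auto simp: matrix_add_ldistrib)

lemma Psi_lin_scaleR: "Psi_lin H A B K (\<lambda>k. r *\<^sub>R a k) i = r *\<^sub>R Psi_lin H A B K a i"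
  unfolding Psi_lin_def scaleR_sum_right
  by (rule sum.cong) (auto simp: matrix_scalar_ac scalar_matrix_assoc)

lemma policy_linear_ysurr_lin: "policy_linear (ysurr_lin H A B K w t)"
  unfolding policy_linear_def ysurr_lin_def sum.distrib[symmetric] scaleR_sum_right
  by (auto intro!: sum.cong simp: Psi_lin_add Psi_lin_scaleR
      matrix_vector_mult_add_rdistrib scaleR_matrix_vector_assoc)

lemma policy_linear_vsurr_lin: "policy_linear (vsurr_lin H A B K w t)"
  using policy_linear_ysurr_lin[of H A B K w t]
  unfolding policy_linear_def vsurr_lin_def
  by (simp add: matrix_vector_right_distrib matrix_vector_mult_add_rdistrib sum.distrib
      matrix_vector_mult_scaleR scaleR_matrix_vector_assoc[symmetric] scaleR_sum_right
      algebra_simps)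

lemma fsurr_add:
  "fsurr H A B K w c t (\<lambda>i. M i + D i) =
    (\<lambda>q. c t (fst q) (snd q)) ((ysurr H A B K w (\<lambda>_. M) (int t), vsurr H A B K w (\<lambda>_. M) (int t))
       + (ysurr_lin H A B K w (int t) D, vsurr_lin H A B K w (int t) D))"
proof -
  have y: "ysurr H A B K w (\<lambda>_. \<lambda>i. M i + D i) s = ysurr H A B K w (\<lambda>_. M) s + ysurr_lin H A B K w s D" for s
    unfolding ysurr_def ysurr_lin_def Psi_const Psi_lin_add sum.distrib[symmetric]
    by (rule sum.cong) (auto simp: matrix_vector_mult_add_rdistrib)
  then have "vsurr H A B K w (\<lambda>_. \<lambda>i. M i + D i) s = vsurr H A B K w (\<lambda>_. M) s + vsurr_lin H A B K w s D" for s
    unfolding vsurr_def vsurr_lin_def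
    by (simp add: matrix_vector_right_distrib matrix_vector_mult_add_rdistrib sum.distrib algebra_simps)
  with y show ?thesis
    by (simp add: fsurr_def Fsurr_def)
qed

lemma fsurr_first_order:
  assumes c_diff: "\<And>p. (\<lambda>q. c t (fst q) (snd q)) differentiable (at p)"
    and c_convex: "convex_on UNIV (\<lambda>q. c t (fst q) (snd q))"
    and PM: "M \<in> policy_space H" and PM': "M' \<in> policy_space H"
  shows "fsurr H A B K w c t M + frob_inner H (grad H (fsurr H A B K w c t) M) (\<lambda>i. M' i - M i)
      \<le> fsurr H A B K w c t M'"
proof -
  define \<phi> where "\<phi> = (\<lambda>q. c t (fst q) (snd q))"
  define p where "p = (ysurr H A B K w (\<lambda>_. M) (int t), vsurr H A B K w (\<lambda>_. M) (int t))"
  define h where "h = (\<lambda>D. (ysurr_lin H A B K w (int t) D, vsurr_lin H A B K w (int t) D))"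
  define g where "g = fsurr H A B K w c t"
  have g_eq: "g (\<lambda>i. M i + D i) = \<phi> (p + h D)" for D
    unfolding g_def \<phi>_def p_def h_def by (rule fsurr_add)
  have h: "policy_linear h"
    using policy_linear_ysurr_lin[of H A B K w "int t"] policy_linear_vsurr_lin[of H A B K w "int t"]
    by (simp add: policy_linear_def h_def)
  have "is_grad H g M (grad H g M)"
    using h g_eq c_diff unfolding \<phi>_def by (rule is_grad_affine_comp)
  moreover have "g (\<lambda>i. M i + s *\<^sub>R (M' i - M i)) \<le> (1 - s) * g M + s * g M'"
    if "0 < s" "s \<le> 1" for s
  proof -
    have "h (\<lambda>i. s *\<^sub>R (M' i - M i)) = s *\<^sub>R h (\<lambda>i. M' i - M i)"
      using h by (simp add: policy_linear_def)
    then have "g M = \<phi> p" "g M' = \<phi> (p + h (\<lambda>i. M' i - M i))"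
      "g (\<lambda>i. M i + s *\<^sub>R (M' i - M i)) = \<phi> ((1 - s) *\<^sub>R p + s *\<^sub>R (p + h (\<lambda>i. M' i - M i)))"
      using g_eq[of "\<lambda>i. 0"] g_eq[of "\<lambda>i. M' i - M i"] g_eq[of "\<lambda>i. s *\<^sub>R (M' i - M i)"]
        policy_linear_zero[OF h]
      by (simp_all add: algebra_simps)
    then show ?thesis
      using convex_onD[OF c_convex[folded \<phi>_def]] that by simp
  qed
  ultimately show ?thesis
    unfolding g_def by (rule is_grad_convex_ineq[OF _ PM PM'])
qed

lemma Fsurr_cong_window:
  assumes eq: "\<And>s. 1 \<le> s \<Longrightarrow> int t - 1 - int H \<le> s \<Longrightarrow> s \<le> int t \<Longrightarrow> Ms s = Ms' s"
    and noise: "\<And>s. s < 0 \<Longrightarrow> w s = 0"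
  shows "Fsurr H A B K w c t Ms = Fsurr H A B K w c t Ms'"
proof -
  have "Psi H A B K Ms (int t - 1) H i = Psi H A B K Ms' (int t - 1) H i"
    if "0 \<le> int t - 1 - int i" for i
    unfolding Psi_def using that by (auto intro!: arg_cong2[where f="(+)"] sum.cong simp: eq)
  then have y: "ysurr H A B K w Ms (int t) = ysurr H A B K w Ms' (int t)"
    unfolding ysurr_def by (intro sum.cong refl) (metis noise not_le zero_vec_def matrix_vector_mult_0_right)
  have "vsurr H A B K w Ms (int t) = vsurr H A B K w Ms' (int t)"
  proof (cases "t = 0")
    case True
    then show ?thesis unfolding vsurr_def y using noise by simp
  next
    case False
    then show ?thesis unfolding vsurr_def y using eq[of "int t"] by simp
  qed
  with y show ?thesis
    unfolding Fsurr_def by simp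
qed

section \<open>The policy set and its projection\<close>

lemma opnorm_bound: "norm (Y *v v) \<le> opnorm Y * norm v"
  for Y :: "real^'n^'m"
  unfolding opnorm_def using onorm[OF matrix_vector_mul_bounded_linear[of Y]] by simp

lemma opnorm_nonneg: "0 \<le> opnorm Y"
  for Y :: "'a::{euclidean_space,real_normed_field}^'n^'m"
  unfolding opnorm_def using onorm_pos_le[OF matrix_vector_mul_bounded_linear[of Y]] by simp

lemma opnorm_le_iff: "opnorm Y \<le> r \<longleftrightarrow> (\<forall>v. norm (Y *v v) \<le> r * norm v)"
  for Y :: "real^'n^'m"
proof
  assume "opnorm Y \<le> r"
  then show "\<forall>v. norm (Y *v v) \<le> r * norm v"
    using opnorm_bound[of Y] by (meson mult_right_mono norm_ge_zero order_trans)
next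
  assume "\<forall>v. norm (Y *v v) \<le> r * norm v"
  then show "opnorm Y \<le> r"
    unfolding opnorm_def by (intro onorm_le) auto
qed

lemma opnorm_add: "opnorm (X + Y) \<le> opnorm X + opnorm Y"
  for X Y :: "real^'n^'m"
  unfolding opnorm_def matrix_vector_mult_add_rdistrib
  by (rule onorm_triangle) (rule matrix_vector_mul_bounded_linear)+

lemma opnorm_scaleR: "opnorm (r *\<^sub>R X) = \<bar>r\<bar> * opnorm X"
  for X :: "real^'n^'m"
proof -
  have "(\<lambda>v. (r *\<^sub>R X) *v v) = (\<lambda>v. r *\<^sub>R (X *v v))"
    by (simp add: scaleR_matrix_vector_assoc)
  then show ?thesis
    unfolding opnorm_def using onorm_scaleR[OF matrix_vector_mul_bounded_linear[of X], of r] by simp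
qed

lemma opnorm_diff: "opnorm (X - Y) \<le> opnorm X + opnorm Y"
  for X Y :: "real^'n^'m"
  using opnorm_add[of X "- Y"] opnorm_scaleR[of "- 1" Y] by simp

lemma convex_opnorm_ball: "convex {Y :: real^'n^'m. opnorm Y \<le> r}"
proof (rule convexI, simp)
  fix X Y :: "real^'n^'m" and u v :: real
  assume "opnorm X \<le> r" "opnorm Y \<le> r" "0 \<le> u" "0 \<le> v" "u + v = 1"
  then have "u * opnorm X + v * opnorm Y \<le> u * r + v * r"
    by (intro add_mono mult_left_mono)
  also have "\<dots> = r"
    using \<open>u + v = 1\<close> by (simp flip: distrib_right)
  finally have "u * opnorm X + v * opnorm Y \<le> r" .
  then show "opnorm (u *\<^sub>R X + v *\<^sub>R Y) \<le> r"
    using opnorm_add[of "u *\<^sub>R X" "v *\<^sub>R Y"] \<open>0 \<le> u\<close> \<open>0 \<le> v\<close> by (simp add: opnorm_scaleR)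
qed

lemma closed_opnorm_ball: "closed {Y :: real^'n^'m. opnorm Y \<le> r}"
proof -
  have "closed {Y :: real^'n^'m. norm (Y *v v) \<le> r * norm v}" for v :: "real^'n"
  proof -
    have "linear (\<lambda>Y :: real^'n^'m. Y *v v)"
      by (rule linearI) (simp_all add: matrix_vector_mult_add_rdistrib scaleR_matrix_vector_assoc)
    then have "continuous_on UNIV (\<lambda>Y :: real^'n^'m. norm (Y *v v))"
      by (intro continuous_on_norm linear_continuous_on linear_conv_bounded_linear[THEN iffD1])
    then show ?thesis
      by (intro closed_Collect_le) (auto intro: continuous_on_const)
  qed
  then have "closed (\<Inter>v. {Y :: real^'n^'m. norm (Y *v v) \<le> r * norm v})"
    by (intro closed_INT) simp
  moreover have "{Y :: real^'n^'m. opnorm Y \<le> r} = (\<Inter>v. {Y. norm (Y *v v) \<le> r * norm v})"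
    using opnorm_le_iff by blast
  ultimately show ?thesis
    by simp
qed

lemma Mset_iff:
  "M \<in> Mset H kB k g \<longleftrightarrow> M \<in> policy_space H \<and> (\<forall>i<H. opnorm (M i) \<le> 2 * kB * k^3 * (1 - g)^i)"
  by (simp add: Mset_def)

lemma proj_Mset_eq:
  fixes X M0 :: "nat \<Rightarrow> real^'x^'u" and kB k g :: real
  defines "S \<equiv> \<lambda>i. {Y :: real^'x^'u. opnorm Y \<le> 2 * kB * k^3 * (1 - g)^i}"
  assumes M0: "M0 \<in> Mset H kB k g"
  shows "proj H (Mset H kB k g) X = (\<lambda>i. if i < H then closest_point (S i) (X i) else 0)"
    (is "_ = ?P")
proof -
  have cl: "closed (S i)" "convex (S i)" for i
    unfolding S_def by (rule closed_opnorm_ball convex_opnorm_ball)+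
  have "M0 i \<in> S i" if "i < H" for i
    using M0 that by (simp add: Mset_iff S_def)
  then have "closest_point (S i) (X i) \<in> S i" if "i < H" for i
    using closest_point_in_set[OF cl(1)] that by blast
  then have P: "?P \<in> Mset H kB k g"
    by (simp add: Mset_iff S_def policy_space_def)
  have closest: "norm (X i - ?P i) \<le> norm (X i - Z i)" if "Z \<in> Mset H kB k g" "i < H" for Z i
    using closest_point_le[OF cl(1), of "Z i" i "X i"] that by (simp add: Mset_iff S_def dist_norm)
  show ?thesis
    unfolding proj_def
  proof (rule the_equality)
    show "?P \<in> Mset H kB k g \<and> (\<forall>Z\<in>Mset H kB k g. frob H (\<lambda>i. X i - ?P i) \<le> frob H (\<lambda>i. X i - Z i))"
      using P closest unfolding frob_L2 by (auto intro!: L2_set_mono)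
  next
    fix Y assume Y: "Y \<in> Mset H kB k g \<and> (\<forall>Z\<in>Mset H kB k g. frob H (\<lambda>i. X i - Y i) \<le> frob H (\<lambda>i. X i - Z i))"
    have "frob H (\<lambda>i. X i - ?P i) \<le> frob H (\<lambda>i. X i - Y i)"
      using Y closest unfolding frob_L2 by (auto intro!: L2_set_mono)
    moreover have "frob H (\<lambda>i. X i - Y i) \<le> frob H (\<lambda>i. X i - ?P i)"
      using bspec[OF conjunct2[OF Y] P] by simp
    ultimately have "frob H (\<lambda>i. X i - Y i) = frob H (\<lambda>i. X i - ?P i)"
      by linarith
    then have sums: "(\<Sum>i<H. (norm (X i - ?P i))\<^sup>2) = (\<Sum>i<H. (norm (X i - Y i))\<^sup>2)"
      using frob_sq[of H "\<lambda>i. X i - Y i"] frob_sq[of H "\<lambda>i. X i - ?P i"] by simp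
    have le: "(norm (X j - ?P j))\<^sup>2 \<le> (norm (X j - Y j))\<^sup>2" if "j \<in> {..<H}" for j
      using closest[of Y j] Y that by (simp add: power_mono)
    have "Y i = closest_point (S i) (X i)" if "i < H" for i
    proof (rule closest_point_unique[OF cl(2,1)])
      show "Y i \<in> S i"
        using Y that by (simp add: Mset_iff S_def)
      have "(norm (X i - ?P i))\<^sup>2 = (norm (X i - Y i))\<^sup>2"
        by (rule sum_mono_inv[OF sums le]) (use that in simp_all)
      then have "norm (X i - Y i) = norm (X i - closest_point (S i) (X i))"
        using that by (simp add: power2_eq_iff_nonneg)
      then show "\<forall>z\<in>S i. dist (X i) (Y i) \<le> dist (X i) z"
        using closest_point_le[OF cl(1)] by (simp add: dist_norm)
    qed
    moreover have "Y \<in> policy_space H" "?P \<in> policy_space H"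
      using Y P by (simp_all add: Mset_iff)
    ultimately show "Y = ?P"
      by (intro policy_space_eqI) auto
  qed
qed

lemma proj_Mset:
  fixes X M0 :: "nat \<Rightarrow> real^'x^'u"
  assumes M0: "M0 \<in> Mset H kB k g"
  shows "proj H (Mset H kB k g) X \<in> Mset H kB k g"
    and "Z \<in> Mset H kB k g \<Longrightarrow> frob H (\<lambda>i. proj H (Mset H kB k g) X i - Z i) \<le> frob H (\<lambda>i. X i - Z i)"
proof -
  define S where "S i = {Y :: real^'x^'u. opnorm Y \<le> 2 * kB * k^3 * (1 - g)^i}" for i
  have cl: "closed (S i)" "convex (S i)" for i
    unfolding S_def by (rule closed_opnorm_ball convex_opnorm_ball)+
  have P: "proj H (Mset H kB k g) X = (\<lambda>i. if i < H then closest_point (S i) (X i) else 0)"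
    unfolding S_def by (rule proj_Mset_eq[OF M0])
  have "S i \<noteq> {}" if "i < H" for i
    using M0 that by (auto simp: Mset_iff S_def)
  then show "proj H (Mset H kB k g) X \<in> Mset H kB k g"
    unfolding P using closest_point_in_set[OF cl(1)] by (auto simp: Mset_iff S_def policy_space_def)
  assume Z: "Z \<in> Mset H kB k g"
  have "norm (closest_point (S i) (X i) - Z i) \<le> norm (X i - Z i)" if "i < H" for i
    using closest_point_lipschitz[OF cl(2,1), of i "X i" "Z i"] closest_point_self[of "Z i" "S i"] Z that
    by (auto simp: Mset_iff S_def dist_norm)
  then show "frob H (\<lambda>i. proj H (Mset H kB k g) X i - Z i) \<le> frob H (\<lambda>i. X i - Z i)"
    unfolding P frob_L2 by (auto intro!: L2_set_mono)
qed

lemma norm_sq_le_card_opnorm_sq: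
  fixes Y :: "real^'x^'u"
  shows "(norm Y)\<^sup>2 \<le> real CARD('x) * (opnorm Y)\<^sup>2"
proof -
  have "(norm Y)\<^sup>2 = (\<Sum>a\<in>UNIV. \<Sum>b\<in>UNIV. (Y$a$b)\<^sup>2)"
    unfolding power2_norm_eq_inner by (simp add: inner_vec_def power2_eq_square)
  also have "\<dots> = (\<Sum>b\<in>UNIV. \<Sum>a\<in>UNIV. (Y$a$b)\<^sup>2)"
    by (rule sum.swap)
  also have "\<dots> = (\<Sum>b\<in>UNIV. (norm (Y *v axis b 1))\<^sup>2)"
    unfolding matrix_vector_mult_basis power2_norm_eq_inner
    by (simp add: inner_vec_def column_def power2_eq_square)
  also have "\<dots> \<le> (\<Sum>b\<in>(UNIV::'x set). (opnorm Y)\<^sup>2)"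
    using opnorm_bound[of Y "axis _ 1"] by (intro sum_mono power_mono) auto
  finally show ?thesis
    by simp
qed

lemma Mset_frob_diameter:
  fixes M1 M2 :: "nat \<Rightarrow> real^'x^'u"
  assumes M1: "M1 \<in> Mset H kB k g" and M2: "M2 \<in> Mset H kB k g" and g: "0 < g" "g \<le> 1"
    and n: "CARD('x) \<le> n"
  shows "(frob H (\<lambda>i. M1 i - M2 i))\<^sup>2 \<le> (4 * kB * k^3 * sqrt (real n) / g)\<^sup>2"
proof -
  define R where "R = 2 * kB * k^3"
  define q where "q = (1 - g)\<^sup>2"
  have q: "0 \<le> q" "q < 1"
    using g power_strict_mono[of "1 - g" 1 2] by (auto simp: q_def)
  have block: "(norm (M1 i - M2 i))\<^sup>2 \<le> 4 * real n * R\<^sup>2 * q^i" if "i < H" for i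
  proof -
    have "opnorm (M1 i) \<le> R * (1 - g)^i" "opnorm (M2 i) \<le> R * (1 - g)^i"
      using M1 M2 that by (auto simp: Mset_iff R_def)
    then have "opnorm (M1 i - M2 i) \<le> 2 * (R * (1 - g)^i)"
      using opnorm_diff[of "M1 i" "M2 i"] by linarith
    then have "(opnorm (M1 i - M2 i))\<^sup>2 \<le> (2 * (R * (1 - g)^i))\<^sup>2"
      by (intro power_mono opnorm_nonneg)
    also have "\<dots> = 4 * R\<^sup>2 * q^i"
      by (simp add: q_def power_mult_distrib power_mult[symmetric] mult.commute)
    finally have "real CARD('x) * (opnorm (M1 i - M2 i))\<^sup>2 \<le> real n * (4 * R\<^sup>2 * q^i)"
      using n by (intro mult_mono) auto
    then show ?thesis
      using norm_sq_le_card_opnorm_sq[of "M1 i - M2 i"] by (simp add: mult.assoc)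
  qed
  have geometric: "(\<Sum>i<H. q^i) \<le> 1 / g\<^sup>2"
  proof -
    have "(\<Sum>i<H. q^i) = (1 - q^H) / (1 - q)"
      using q by (simp add: sum_gp_strict)
    also have "\<dots> \<le> 1 / (1 - q)"
      using q by (intro divide_right_mono) auto
    also have "\<dots> \<le> 1 / g\<^sup>2"
      using g q by (intro divide_left_mono) (auto simp: q_def power2_eq_square algebra_simps)
    finally show ?thesis .
  qed
  have "(frob H (\<lambda>i. M1 i - M2 i))\<^sup>2 \<le> (\<Sum>i<H. 4 * real n * R\<^sup>2 * q^i)"
    unfolding frob_sq using block by (intro sum_mono) simp
  also have "\<dots> = 4 * real n * R\<^sup>2 * (\<Sum>i<H. q^i)"
    by (simp add: sum_distrib_left)
  also have "\<dots> \<le> 4 * real n * R\<^sup>2 * (1 / g\<^sup>2)"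
    by (rule mult_left_mono) (use geometric in simp_all)
  also have "\<dots> = (4 * kB * k^3 * sqrt (real n) / g)\<^sup>2"
    by (simp add: R_def power_mult_distrib power_divide)
  finally show ?thesis .
qed

section \<open>Online gradient descent with memory\<close>

lemma ogd_regret:
  fixes x g :: "nat \<Rightarrow> nat \<Rightarrow> real^'x^'u" and l :: "nat \<Rightarrow> (nat \<Rightarrow> real^'x^'u) \<Rightarrow> real"
  assumes \<eta>: "0 < \<eta>"
    and first_order: "\<And>t. t < T \<Longrightarrow> l t (x t) + frob_inner H (g t) (\<lambda>i. M i - x t i) \<le> l t M"
    and step: "\<And>t. Suc t < T \<Longrightarrow>
      frob H (\<lambda>i. x (Suc t) i - M i) \<le> frob H (\<lambda>i. x t i - \<eta> *\<^sub>R g t i - M i)"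
    and start: "(frob H (\<lambda>i. x 0 i - M i))\<^sup>2 \<le> D\<^sup>2"
  shows "(\<Sum>t<T. l t (x t) - l t M) \<le> D\<^sup>2 / (2 * \<eta>) + \<eta> / 2 * (\<Sum>t<T. (frob H (g t))\<^sup>2)"
proof -
  define e where "e t = (if t < T then (frob H (\<lambda>i. x t i - M i))\<^sup>2 else 0)" for t
  have "l t (x t) - l t M \<le> (e t - e (Suc t)) / (2 * \<eta>) + \<eta> / 2 * (frob H (g t))\<^sup>2"
    if "t < T" for t
  proof -
    have "(\<lambda>i. x t i - \<eta> *\<^sub>R g t i - M i) = (\<lambda>i. (x t i - M i) - \<eta> *\<^sub>R g t i)"
      by (simp add: algebra_simps)
    then have "e (Suc t) \<le> (frob H (\<lambda>i. (x t i - M i) - \<eta> *\<^sub>R g t i))\<^sup>2"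
      using step[of t] by (auto simp: e_def intro: power_mono)
    also have "\<dots> = e t - 2 * \<eta> * frob_inner H (g t) (\<lambda>i. x t i - M i) + \<eta>\<^sup>2 * (frob H (g t))\<^sup>2"
      using that by (simp add: frob_diff_scaleR_sq e_def)
    finally have "frob_inner H (g t) (\<lambda>i. x t i - M i)
        \<le> (e t - e (Suc t)) / (2 * \<eta>) + \<eta> / 2 * (frob H (g t))\<^sup>2"
      using \<eta> by (simp add: field_simps power2_eq_square)
    then show ?thesis
      using first_order[OF that] frob_inner_minus_commute[of H "g t" M "x t"] by linarith
  qed
  then have "(\<Sum>t<T. l t (x t) - l t M)
      \<le> (\<Sum>t<T. (e t - e (Suc t)) / (2 * \<eta>) + \<eta> / 2 * (frob H (g t))\<^sup>2)"
    by (intro sum_mono) simp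
  also have "\<dots> = (e 0 - e T) / (2 * \<eta>) + \<eta> / 2 * (\<Sum>t<T. (frob H (g t))\<^sup>2)"
    by (simp add: sum.distrib sum_divide_distrib[symmetric] sum_distrib_left sum_lessThan_telescope')
  also have "\<dots> \<le> D\<^sup>2 / (2 * \<eta>) + \<eta> / 2 * (\<Sum>t<T. (frob H (g t))\<^sup>2)"
    using start \<eta> by (auto simp: e_def intro!: divide_right_mono)
  finally show ?thesis .
qed

lemma ogd_drift:
  fixes x g :: "nat \<Rightarrow> nat \<Rightarrow> real^'x^'u"
  assumes step: "\<And>s. Suc s < T \<Longrightarrow> frob H (\<lambda>j. x s j - x (Suc s) j) \<le> \<eta> * frob H (g s)"
    and "t < T" "i \<le> t"
  shows "frob H (\<lambda>j. x (t - i) j - x t j) \<le> \<eta> * (\<Sum>k\<in>{1..i}. frob H (g (t - k)))"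
  using \<open>i \<le> t\<close>
proof (induction i)
  case 0
  then show ?case
    by (simp add: frob_def)
next
  case (Suc i)
  have "frob H (\<lambda>j. x (t - Suc i) j - x t j)
      \<le> frob H (\<lambda>j. x (t - Suc i) j - x (t - i) j) + frob H (\<lambda>j. x (t - i) j - x t j)"
    using frob_triangle[of H "\<lambda>j. x (t - Suc i) j - x (t - i) j" "\<lambda>j. x (t - i) j - x t j"] by simp
  also have "\<dots> \<le> \<eta> * frob H (g (t - Suc i)) + \<eta> * (\<Sum>k\<in>{1..i}. frob H (g (t - k)))"
    using step[of "t - Suc i"] Suc \<open>t < T\<close> by (intro add_mono) (simp_all add: Suc_diff_Suc)
  also have "\<dots> = \<eta> * (\<Sum>k\<in>{1..Suc i}. frob H (g (t - k)))"
    by (simp add: algebra_simps)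
  finally show ?case .
qed

lemma replacement_chain_bound:
  fixes F :: "(int \<Rightarrow> 'a) \<Rightarrow> real" and X :: "int \<Rightarrow> 'a" and t :: int
  assumes step: "\<And>k Y y. 1 \<le> k \<Longrightarrow> k \<le> m \<Longrightarrow> (\<And>s. s \<in> W \<Longrightarrow> Y s \<in> S) \<Longrightarrow> y \<in> S \<Longrightarrow>
      F Y - F (Y(t - int k := y)) \<le> L * d (Y (t - int k)) y"
    and X: "\<And>s. s \<in> W \<Longrightarrow> X s \<in> S" "X t \<in> S"
  shows "F X - F (\<lambda>s. if t - int m \<le> s \<and> s < t then X t else X s)
      \<le> L * (\<Sum>k\<in>{1..m}. d (X (t - int k)) (X t))"
proof -
  define N where "N k = (\<lambda>s. if t - int k \<le> s \<and> s < t then X t else X s)" for k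
  have "F X - F (N k) \<le> L * (\<Sum>j\<in>{1..k}. d (X (t - int j)) (X t))" if "k \<le> m" for k
    using that
  proof (induction k)
    case 0
    have "N 0 = X"
      by (auto simp: N_def fun_eq_iff)
    then show ?case
      by simp
  next
    case (Suc k)
    have "N (Suc k) = (N k)(t - int (Suc k) := X t)" "N k (t - int (Suc k)) = X (t - int (Suc k))"
      by (auto simp: N_def fun_eq_iff)
    moreover have "N k s \<in> S" if "s \<in> W" for s
      using X that by (simp add: N_def)
    ultimately have "F (N k) - F (N (Suc k)) \<le> L * d (X (t - int (Suc k))) (X t)"
      using step[of "Suc k" "N k" "X t"] Suc.prems X(2) by simp
    then show ?case
      using Suc by (simp add: algebra_simps)
  qed
  then show ?thesis
    by (simp add: N_def)
qed

lemma Fsurr_sub_fsurr_le: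
  fixes Ms :: "int \<Rightarrow> nat \<Rightarrow> real^'x^'u"
  assumes noise: "\<And>s. s < 0 \<Longrightarrow> w s = 0"
    and window: "\<And>s. int t - 1 - int H \<le> s \<Longrightarrow> s \<le> int t \<Longrightarrow> Ms s \<in> S"
    and Lip: "\<And>k Y y. k \<le> H + 1 \<Longrightarrow> (\<And>s. int t - 1 - int H \<le> s \<Longrightarrow> s \<le> int t \<Longrightarrow> Y s \<in> S) \<Longrightarrow>
      y \<in> S \<Longrightarrow> \<bar>Fsurr H A B K w c t Y - Fsurr H A B K w c t (Y(int t - int k := y))\<bar>
        \<le> L * frob H (\<lambda>i. Y (int t - int k) i - y i)"
  shows "Fsurr H A B K w c t Ms - fsurr H A B K w c t (Ms (int t))
    \<le> L * (\<Sum>k\<in>{1..min (H + 1) t}. frob H (\<lambda>i. Ms (int t - int k) i - Ms (int t) i))"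
proof -
  let ?m = "min (H + 1) t"
  let ?N = "\<lambda>s. if int t - int ?m \<le> s \<and> s < int t then Ms (int t) else Ms s"
  have "Fsurr H A B K w c t Ms - Fsurr H A B K w c t ?N
      \<le> L * (\<Sum>k\<in>{1..?m}. frob H (\<lambda>i. Ms (int t - int k) i - Ms (int t) i))"
  proof (rule replacement_chain_bound[where W="{int t - 1 - int H..int t}" and S=S])
    fix k Y y
    assume "1 \<le> k" "k \<le> ?m" "\<And>s. s \<in> {int t - 1 - int H..int t} \<Longrightarrow> Y s \<in> S" "y \<in> S"
    then show "Fsurr H A B K w c t Y - Fsurr H A B K w c t (Y(int t - int k := y))
        \<le> L * frob H (\<lambda>i. Y (int t - int k) i - y i)"
      using Lip[of k Y y] by (simp add: abs_le_iff)
  qed (use window in simp_all)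
  moreover have "Fsurr H A B K w c t ?N = fsurr H A B K w c t (Ms (int t))"
    unfolding fsurr_def by (rule Fsurr_cong_window[OF _ noise]) auto
  ultimately show ?thesis
    by simp
qed

lemma strongly_stable_gamma_bounds:
  fixes A :: "real^'x^'x"
  assumes "strongly_stable \<kappa> \<gamma> A B K"
  shows "0 < \<gamma>" "\<gamma> \<le> 1"
proof -
  obtain P :: "complex^'x^'x" where "opnorm P \<le> 1 - \<gamma>"
    using assms unfolding strongly_stable_def by blast
  then show "\<gamma> \<le> 1"
    using opnorm_nonneg[of P] by linarith
  show "0 < \<gamma>"
    using assms by (simp add: strongly_stable_def)
qed

theorem proposition2:
  fixes A :: "real^'x^'x" and B :: "real^'u^'x" and K :: "real^'x^'u"
    and w :: "int \<Rightarrow> real^'x"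
    and c :: "nat \<Rightarrow> real^'x \<Rightarrow> real^'u \<Rightarrow> real"
    and H T :: nat and \<kappa> \<gamma> \<eta> L\<^sub>c :: real
    and Ms :: "int \<Rightarrow> nat \<Rightarrow> real^'x^'u"
  defines "\<kappa>B \<equiv> max (opnorm B) 1"
  defines "n \<equiv> max CARD('x) CARD('u)"
  defines "\<M> \<equiv> Mset H \<kappa>B \<kappa> \<gamma>"
  defines "F \<equiv> Fsurr H A B K w c"
  defines "f \<equiv> fsurr H A B K w c"
  defines "D \<equiv> 4 * \<kappa>B * \<kappa>^3 * sqrt (real n) / \<gamma>"
  assumes H_pos: "0 < H"
    and noise: "\<And>s. s < 0 \<Longrightarrow> w s = 0"
    and c_diff: "\<And>t p. (\<lambda>q. c t (fst q) (snd q)) differentiable (at p)"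
    and c_convex: "\<And>t. convex_on UNIV (\<lambda>q. c t (fst q) (snd q))"
    and stable: "strongly_stable \<kappa> \<gamma> A B K"
    and init: "\<And>t. - int H - 1 \<le> t \<Longrightarrow> t \<le> 0 \<Longrightarrow> Ms t \<in> \<M>"
    and eta_pos: "0 < \<eta>"
    and ogd: "\<And>t. t + 1 < T \<Longrightarrow>
        Ms (int t + 1) = proj H \<M> (\<lambda>i. Ms (int t) i - \<eta> *\<^sub>R grad H (f t) (Ms (int t)) i)"
    and Lc_pos: "0 < L\<^sub>c"
    and Lc: "\<And>k t Ms' Mc. k \<le> H + 1 \<Longrightarrow> t < T \<Longrightarrow>
        (\<And>s. int t - 1 - int H \<le> s \<Longrightarrow> s \<le> int t \<Longrightarrow> Ms' s \<in> \<M>) \<Longrightarrow> Mc \<in> \<M> \<Longrightarrow>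
        \<bar>F t Ms' - F t (Ms'(int t - int k := Mc))\<bar>
          \<le> L\<^sub>c * frob H (\<lambda>i. Ms' (int t - int k) i - Mc i)"
    and M: "M \<in> \<M>"
  shows "(\<Sum>t<T. F t Ms) - (\<Sum>t<T. f t M)
    \<le> L\<^sub>c * \<eta> * (\<Sum>t<T. \<Sum>i\<in>{1..min (H+1) t}. \<Sum>k\<in>{1..i}.
            frob H (grad H (f (t - k)) (Ms (int (t - k)))))
      + D\<^sup>2 / (2 * \<eta>)
      + \<eta> / 2 * (\<Sum>t<T. (frob H (grad H (f t) (Ms (int t))))\<^sup>2)"
proof -
  have \<gamma>: "0 < \<gamma>" "\<gamma> \<le> 1"
    using stable by (rule strongly_stable_gamma_bounds)+
  define G where "G t = grad H (f t) (Ms (int t))" for t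
  have M_proj: "Ms (int (Suc t)) = proj H \<M> (\<lambda>i. Ms (int t) i - \<eta> *\<^sub>R G t i)" if "Suc t < T" for t
    using ogd[of t] that by (simp add: G_def add.commute)
  have in_M: "Ms s \<in> \<M>" if "- int H - 1 \<le> s" "s \<le> int T - 1" for s
  proof (cases "s \<le> 0")
    case True
    then show ?thesis using init that by simp
  next
    case False
    then have "s = int (Suc (nat (s - 1)))" "Suc (nat (s - 1)) < T"
      using that by auto
    then show ?thesis
      using M_proj proj_Mset(1)[OF M[unfolded \<M>_def]] by (metis \<M>_def)
  qed
  have nonexp: "frob H (\<lambda>i. Ms (int (Suc t)) i - Z i) \<le> frob H (\<lambda>i. Ms (int t) i - \<eta> *\<^sub>R G t i - Z i)"
    if "Suc t < T" "Z \<in> \<M>" for t Z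
    unfolding M_proj[OF that(1)] using M that(2) unfolding \<M>_def by (rule proj_Mset(2))
  have regret: "(\<Sum>t<T. f t (Ms (int t)) - f t M) \<le> D\<^sup>2 / (2 * \<eta>) + \<eta> / 2 * (\<Sum>t<T. (frob H (G t))\<^sup>2)"
  proof (rule ogd_regret[OF eta_pos])
    show "f t (Ms (int t)) + frob_inner H (G t) (\<lambda>i. M i - Ms (int t) i) \<le> f t M" if "t < T" for t
      unfolding G_def f_def using in_M[of "int t"] M that
      by (intro fsurr_first_order c_diff c_convex) (auto simp: \<M>_def Mset_iff)
    show "(frob H (\<lambda>i. Ms (int 0) i - M i))\<^sup>2 \<le> D\<^sup>2"
      unfolding D_def n_def using init[of 0] M \<gamma> by (intro Mset_frob_diameter) (auto simp: \<M>_def)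
  qed (use nonexp M in blast)
  have drift: "F t Ms - f t (Ms (int t))
      \<le> L\<^sub>c * \<eta> * (\<Sum>i\<in>{1..min (H+1) t}. \<Sum>k\<in>{1..i}. frob H (G (t - k)))" if "t < T" for t
  proof -
    have step: "frob H (\<lambda>j. Ms (int s) j - Ms (int (Suc s)) j) \<le> \<eta> * frob H (G s)" if "Suc s < T" for s
      using nonexp[OF that in_M[of "int s"]] that eta_pos frob_scaleR[of H "- \<eta>" "G s"]
      by (simp add: frob_minus_commute[of H "Ms (int s)"])
    have "F t Ms - f t (Ms (int t))
        \<le> L\<^sub>c * (\<Sum>i\<in>{1..min (H+1) t}. frob H (\<lambda>j. Ms (int t - int i) j - Ms (int t) j))"
      unfolding F_def f_def
    proof (rule Fsurr_sub_fsurr_le[OF noise])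
      show "Ms s \<in> \<M>" if "int t - 1 - int H \<le> s" "s \<le> int t" for s
        using in_M \<open>t < T\<close> that by simp
      fix k Y y
      assume "k \<le> H + 1" "\<And>s. int t - 1 - int H \<le> s \<Longrightarrow> s \<le> int t \<Longrightarrow> Y s \<in> \<M>" "y \<in> \<M>"
      then show "\<bar>Fsurr H A B K w c t Y - Fsurr H A B K w c t (Y(int t - int k := y))\<bar>
          \<le> L\<^sub>c * frob H (\<lambda>i. Y (int t - int k) i - y i)"
        using Lc[OF _ \<open>t < T\<close>] unfolding F_def by blast
    qed
    also have "\<dots> \<le> L\<^sub>c * (\<Sum>i\<in>{1..min (H+1) t}. \<eta> * (\<Sum>k\<in>{1..i}. frob H (G (t - k))))"
      using ogd_drift[where x="\<lambda>s. Ms (int s)", OF step that] Lc_pos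
      by (intro mult_left_mono sum_mono) (auto simp: of_nat_diff)
    finally show ?thesis
      by (simp add: sum_distrib_left mult.assoc)
  qed
  have "(\<Sum>t<T. F t Ms) - (\<Sum>t<T. f t M)
      = (\<Sum>t<T. F t Ms - f t (Ms (int t))) + (\<Sum>t<T. f t (Ms (int t)) - f t M)"
    by (simp add: sum_subtractf)
  also have "\<dots> \<le> (\<Sum>t<T. L\<^sub>c * \<eta> * (\<Sum>i\<in>{1..min (H+1) t}. \<Sum>k\<in>{1..i}. frob H (G (t - k))))
      + (D\<^sup>2 / (2 * \<eta>) + \<eta> / 2 * (\<Sum>t<T. (frob H (G t))\<^sup>2))"
    using drift regret by (intro add_mono sum_mono) auto
  finally show ?thesis
    by (simp add: G_def sum_distrib_left)
qed

end
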